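(* Let $G(n,p)$ be an Erdős–Rényi random graph on $n$ vertices with $np\to\infty$. Assume the strong external infection regime $0<\kappa<\frac{1}{4(n-1)^2}$, $a>1-\frac{1}{n^\alpha}>1-\kappa>\frac12$ for some $\alpha>1$, and additionally $\lambda\le\frac{1}{n^{1+\alpha}p}$. Let $t^{(n)}_{\mathrm{mix}}(\epsilon)$ be the mixing time of the noisy SIS model run on the realized graph $G(n,p)$. Then for every fixed $\epsilon\in(0,1)$ there is a sequence $\delta_n\to0$ such that for every $\epsilon'>0$ and all $n$ large enough, $$\mathbf{P}\Big(\tfrac{n}{2}\log n\,(1-\delta_n)\le t^{(n)}_{\mathrm{mix}}(\epsilon)\le 2n\log n\,(1+\delta_n)\Big)\ge1-\epsilon',$$ where $\mathbf{P}$ is the law of the random graph.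
   Context: Let $G_n=(V_n,E_n)$ be a finite graph with $|V_n|=n$, and let $\Delta^{(n)}_{\max}=\max_{x\in V_n}\deg(x)$. The state space is $\Omega_n=\{0,1\}^{V_n}$. For $\sigma\in\Omega_n$, $x\in V_n$, let $n_{I,\sigma}(x)=\#\{y\in V_n: y\sim x,\ \sigma_y=1\}$. Fix parameters $a,\lambda,\kappa>0$ (which may depend on $n$), put $p(\sigma,x)=a+\lambda\, n_{I,\sigma}(x)$. The noisy SIS model on $G_n$ is the discrete-time Markov chain on $\Omega_n$ in which, at each step, a vertex $x$ is chosen uniformly at random and only its state may change: if $\sigma_x=0$ it becomes $1$ with probability $p(\sigma,x)$ and stays $0$ otherwise; if $\sigma_x=1$ it becomes $0$ with probability $\kappa$ and stays $1$ otherwise. It has unique stationary distribution $\mu^n_{a,\lambda,\kappa}$. With $\mu^n_{\eta_0,t}$ the law at time $t$ from $\eta_0$ and $d_{TV}$ total variation distance, $d^{(n)}(t)=\sup_{\eta_0}d_{TV}(\mu^n_{\eta_0,t},\mu^n_{a,\lambda,\kappa})$ and $t^{(n)}_{\mathrm{mix}}(\epsilon)=\inf\{t\ge0:d^{(n)}(t)\le\epsilon\}$. In $G(n,p)$ each unordered pair of distinct vertices is an edge independently with probability $p$. *)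

theory Defs
  imports Complex_Main
begin

text \<open>Vertices of G_n are 0,...,n-1. A graph is a set of edges, each edge a
2-element set {i,j} of vertices. A configuration sigma is the set of infected
vertices (those x with sigma_x = 1).\<close>

definition all_pairs :: "nat \<Rightarrow> nat set set" where
  "all_pairs n = {e. \<exists>i j. i < j \<and> j < n \<and> e = {i, j}}"

definition gnp_prob :: "nat \<Rightarrow> real \<Rightarrow> (nat set set \<Rightarrow> bool) \<Rightarrow> real" where
  "gnp_prob n p P =
     (\<Sum>E\<in>{E. E \<subseteq> all_pairs n \<and> P E}.
        p ^ card E * (1 - p) ^ (card (all_pairs n) - card E))"

definition states :: "nat \<Rightarrow> nat set set" where
  "states n = Pow {..<n}"

definition n_inf :: "nat set set \<Rightarrow> nat set \<Rightarrow> nat \<Rightarrow> nat" where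
  "n_inf E \<sigma> x = card {y \<in> \<sigma>. {x, y} \<in> E}"

definition site_step ::
  "nat set set \<Rightarrow> real \<Rightarrow> real \<Rightarrow> real \<Rightarrow> nat \<Rightarrow> nat set \<Rightarrow> nat set \<Rightarrow> real" where
  "site_step E a lam kap x \<sigma> \<tau> =
     (if x \<notin> \<sigma> then
        (let q = min 1 (a + lam * real (n_inf E \<sigma> x)) in
          if \<tau> = insert x \<sigma> then q else if \<tau> = \<sigma> then 1 - q else 0)
      else
        (if \<tau> = \<sigma> - {x} then kap else if \<tau> = \<sigma> then 1 - kap else 0))"

definition sis_kernel ::
  "nat \<Rightarrow> nat set set \<Rightarrow> real \<Rightarrow> real \<Rightarrow> real \<Rightarrow> nat set \<Rightarrow> nat set \<Rightarrow> real" where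
  "sis_kernel n E a lam kap \<sigma> \<tau> =
     (\<Sum>x<n. site_step E a lam kap x \<sigma> \<tau>) / real n"

fun sis_law ::
  "nat \<Rightarrow> nat set set \<Rightarrow> real \<Rightarrow> real \<Rightarrow> real \<Rightarrow> nat set \<Rightarrow> nat \<Rightarrow> nat set \<Rightarrow> real" where
  "sis_law n E a lam kap \<eta>0 0 = (\<lambda>\<tau>. if \<tau> = \<eta>0 then 1 else 0)"
| "sis_law n E a lam kap \<eta>0 (Suc t) =
     (\<lambda>\<tau>. \<Sum>\<sigma>\<in>states n. sis_law n E a lam kap \<eta>0 t \<sigma> * sis_kernel n E a lam kap \<sigma> \<tau>)"

definition is_stationary ::
  "nat \<Rightarrow> nat set set \<Rightarrow> real \<Rightarrow> real \<Rightarrow> real \<Rightarrow> (nat set \<Rightarrow> real) \<Rightarrow> bool" where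
  "is_stationary n E a lam kap \<mu> \<longleftrightarrow>
     (\<forall>\<sigma>. \<sigma> \<notin> states n \<longrightarrow> \<mu> \<sigma> = 0) \<and>
     (\<forall>\<sigma>\<in>states n. \<mu> \<sigma> \<ge> 0) \<and>
     (\<Sum>\<sigma>\<in>states n. \<mu> \<sigma>) = 1 \<and>
     (\<forall>\<tau>\<in>states n. \<mu> \<tau> = (\<Sum>\<sigma>\<in>states n. \<mu> \<sigma> * sis_kernel n E a lam kap \<sigma> \<tau>))"

definition sis_stat ::
  "nat \<Rightarrow> nat set set \<Rightarrow> real \<Rightarrow> real \<Rightarrow> real \<Rightarrow> nat set \<Rightarrow> real" where
  "sis_stat n E a lam kap = (THE \<mu>. is_stationary n E a lam kap \<mu>)"

definition tv_dist :: "nat \<Rightarrow> (nat set \<Rightarrow> real) \<Rightarrow> (nat set \<Rightarrow> real) \<Rightarrow> real" where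
  "tv_dist n \<nu> \<mu> = (\<Sum>\<sigma>\<in>states n. \<bar>\<nu> \<sigma> - \<mu> \<sigma>\<bar>) / 2"

definition sis_d :: "nat \<Rightarrow> nat set set \<Rightarrow> real \<Rightarrow> real \<Rightarrow> real \<Rightarrow> nat \<Rightarrow> real" where
  "sis_d n E a lam kap t =
     Max ((\<lambda>\<eta>0. tv_dist n (sis_law n E a lam kap \<eta>0 t) (sis_stat n E a lam kap)) ` states n)"

definition sis_tmix :: "nat \<Rightarrow> nat set set \<Rightarrow> real \<Rightarrow> real \<Rightarrow> real \<Rightarrow> real \<Rightarrow> nat" where
  "sis_tmix n E a lam kap \<epsilon> = (LEAST t. sis_d n E a lam kap t \<le> \<epsilon>)"

end

theory Submission
  imports Defs
begin

text \<open>Because \<open>a \<ge> 1 - \<kappa>\<close>, a healthy vertex that is updated becomes infected with probability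
at least \<open>1 - \<kappa>\<close> whatever its neighbourhood, so neither the graph nor \<open>\<lambda>\<close> matters and the bounds
hold for every realisation of \<open>G(n,p)\<close>. A vertex is healthy at time \<open>t\<close> only if it has not been
updated yet or its last update left it healthy, which has probability at most \<open>(1 - 1/n)^t + \<kappa>\<close>;
by a union bound the chain is in the all-infected state except with probability
\<open>n((1 - 1/n)^t + \<kappa>)\<close>, which is \<open>O(1/n)\<close> at \<open>t = 2n log n\<close> since \<open>n\<kappa> < 1/n\<close>. This minorisation
also yields existence and uniqueness of the stationary law, which charges the all-infected state
with mass close to one. Started from the empty state, the chain can only be all-infected once
every vertex has been updated, and by the coupon collector bound this has probability at most
\<open>(1 - (1 - 1/n)^t)^n \<le> exp (- sqrt n / e)\<close> at \<open>t = (n/2) log n\<close>.\<close>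

lemma one_minus_power_le_exp:
  fixes y :: real
  assumes "0 \<le> y" "y \<le> 1"
  shows "(1 - y) ^ n \<le> exp (- real n * y)"
proof -
  have "(1 - y) ^ n \<le> exp (- y) ^ n"
    using assms by (intro power_mono) (auto simp: exp_ge_add_one_self[of "-y", simplified])
  also have "\<dots> = exp (- real n * y)" by (simp add: exp_of_nat_mult[symmetric])
  finally show ?thesis .
qed

lemma power_add_ge_first_terms:
  fixes r h :: real
  assumes "0 \<le> r" "0 \<le> h"
  shows "r ^ Suc k + real (Suc k) * r ^ k * h \<le> (r + h) ^ Suc k"
proof (induction k)
  case 0 then show ?case by simp
next
  case (Suc k)
  have "r ^ Suc (Suc k) + real (Suc (Suc k)) * r ^ Suc k * h
      \<le> (r + h) * (r ^ Suc k + real (Suc k) * r ^ k * h)"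
    using assms by (simp add: algebra_simps)
  also have "\<dots> \<le> (r + h) * (r + h) ^ Suc k"
    using Suc assms by (intro mult_left_mono) auto
  finally show ?case by simp
qed

lemma ln_ge_1:
  assumes "n \<ge> (3::nat)"
  shows "1 \<le> ln (real n)"
proof -
  have "exp 1 \<le> (3::real)" using exp_le by simp
  also have "\<dots> \<le> real n" using assms by simp
  finally show ?thesis using assms by (simp add: ln_ge_iff)
qed

lemma mult_power_one_minus_inverse_le:
  assumes n: "n \<ge> (3::nat)" and t: "2 * real n * ln (real n) \<le> real t"
  shows "real n * (1 - 1 / real n) ^ t \<le> 1 / real n"
proof -
  have "(1 - 1 / real n) ^ t \<le> exp (- real t * (1 / real n))"
    using n by (intro one_minus_power_le_exp) auto
  also have "\<dots> \<le> exp (- 2 * ln (real n))"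
    using n t by (auto simp: field_simps)
  also have "\<dots> = 1 / real n ^ 2"
  proof -
    have "exp (2 * ln (real n)) = exp (ln (real n ^ 2))" by (simp add: ln_realpow)
    also have "\<dots> = real n ^ 2" using n by simp
    finally show ?thesis by (simp add: exp_minus inverse_eq_divide)
  qed
  finally have "real n * (1 - 1 / real n) ^ t \<le> real n * (1 / real n ^ 2)"
    using n by (intro mult_left_mono) auto
  also have "\<dots> = 1 / real n" using n by (simp add: power2_eq_square)
  finally show ?thesis .
qed

lemma coupon_collector_estimate:
  assumes n: "n \<ge> (3::nat)" and t: "real t \<le> real n / 2 * ln (real n)"
  shows "(1 - (1 - 1 / real n) ^ t) ^ n \<le> exp (- sqrt (real n) / exp 1)"
proof -
  define x where "x = 1 / real n"
  have x: "0 \<le> x" "x \<le> 1/2" using n by (auto simp: x_def field_simps)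
  have ln_le: "ln (real n) \<le> real n"
    using n ln_le_minus_one[of "real n"] by linarith
  have "real t * (x + 2 * x\<^sup>2) \<le> real n / 2 * ln (real n) * (x + 2 * x\<^sup>2)"
    using t x by (intro mult_right_mono) auto
  also have "\<dots> = ln (real n) / 2 + ln (real n) / real n"
    using n by (simp add: x_def power2_eq_square field_simps)
  also have "\<dots> \<le> ln (real n) / 2 + 1"
    using ln_le n by (simp add: divide_le_eq)
  finally have exponent: "- (ln (real n) / 2 + 1) \<le> real t * ln (1 - x)"
    using ln_one_minus_pos_lower_bound[OF x] mult_left_mono[of "- x - 2 * x\<^sup>2" "ln (1 - x)" "real t"]
    by (simp add: algebra_simps)
  have "exp (- (ln (real n) / 2 + 1)) = 1 / (exp (ln (real n) / 2) * exp 1)"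
    by (simp only: exp_add[symmetric] exp_minus[symmetric] inverse_eq_divide[symmetric])
  also have "exp (ln (real n) / 2) = sqrt (real n)"
    using n by (simp add: powr_half_sqrt[symmetric] powr_def)
  finally have "real n * exp (- (ln (real n) / 2 + 1)) = real n * (1 / (sqrt (real n) * exp 1))"
    by simp
  also have "\<dots> = sqrt (real n) / exp 1"
    using n by (simp add: field_simps flip: real_sqrt_mult)
  finally have "sqrt (real n) / exp 1 = real n * exp (- (ln (real n) / 2 + 1))" ..
  also have "\<dots> \<le> real n * exp (real t * ln (1 - x))"
    using exponent by (intro mult_left_mono) auto
  also have "exp (real t * ln (1 - x)) = (1 - x) ^ t"
    using x by (simp add: exp_of_nat_mult)
  finally have many: "sqrt (real n) / exp 1 \<le> real n * (1 - x) ^ t" .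
  have "(1 - (1 - x) ^ t) ^ n \<le> exp (- real n * (1 - x) ^ t)"
    using x by (intro one_minus_power_le_exp power_le_one) auto
  also have "\<dots> \<le> exp (- sqrt (real n) / exp 1)" using many by simp
  finally show ?thesis unfolding x_def .
qed

section \<open>The noisy SIS chain and its healthy vertices\<close>

definition infection_prob :: "nat set set \<Rightarrow> real \<Rightarrow> real \<Rightarrow> nat set \<Rightarrow> nat \<Rightarrow> real" where
  "infection_prob E a lam \<sigma> x = min 1 (a + lam * real (n_inf E \<sigma> x))"

lemma sum_site_step:
  assumes "finite A"
  shows "(\<Sum>\<tau>\<in>A. site_step E a lam kap x \<sigma> \<tau>) =
    (if x \<notin> \<sigma> then (if insert x \<sigma> \<in> A then infection_prob E a lam \<sigma> x else 0)
        + (if \<sigma> \<in> A then 1 - infection_prob E a lam \<sigma> x else 0)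
     else (if \<sigma> - {x} \<in> A then kap else 0) + (if \<sigma> \<in> A then 1 - kap else 0))"
proof (cases "x \<in> \<sigma>")
  case True
  then have "site_step E a lam kap x \<sigma> \<tau> =
      (if \<tau> = \<sigma> - {x} then kap else 0) + (if \<tau> = \<sigma> then 1 - kap else 0)" for \<tau>
    by (auto simp: site_step_def)
  then show ?thesis using True assms by (simp add: sum.distrib)
next
  case False
  let ?q = "infection_prob E a lam \<sigma> x"
  from False have "site_step E a lam kap x \<sigma> \<tau> =
      (if \<tau> = insert x \<sigma> then ?q else 0) + (if \<tau> = \<sigma> then 1 - ?q else 0)" for \<tau>
    by (auto simp: site_step_def infection_prob_def Let_def)
  then show ?thesis using False assms by (simp add: sum.distrib)
qed

locale sis_chain =
  fixes n :: nat and E :: "nat set set" and a lam kap :: real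
  assumes n_pos: "n \<ge> 1" and kap_pos: "0 < kap" and kap_le_1: "kap \<le> 1"
    and a_ge: "1 - kap \<le> a" and lam_nonneg: "0 \<le> lam"
begin

abbreviation "\<Omega> \<equiv> states n"
abbreviation "V \<equiv> {..<n}"
abbreviation "K \<equiv> sis_kernel n E a lam kap"
abbreviation "law \<equiv> sis_law n E a lam kap"

lemma infection_prob_bounds:
  "0 \<le> infection_prob E a lam \<sigma> x" "infection_prob E a lam \<sigma> x \<le> 1"
  "1 - infection_prob E a lam \<sigma> x \<le> kap"
  using mult_nonneg_nonneg[OF lam_nonneg of_nat_0_le_iff[of "n_inf E \<sigma> x"]] a_ge kap_le_1 kap_pos
  by (auto simp: infection_prob_def)

lemma finite_states: "finite \<Omega>" by (simp add: states_def)
lemma full_in_states: "V \<in> \<Omega>" by (simp add: states_def)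
lemma empty_in_states: "{} \<in> \<Omega>" by (simp add: states_def)

lemma site_step_nonneg: "0 \<le> site_step E a lam kap x \<sigma> \<tau>"
  using infection_prob_bounds[of \<sigma> x] kap_le_1 kap_pos
  unfolding site_step_def infection_prob_def Let_def by auto

lemma sis_kernel_nonneg: "0 \<le> K \<sigma> \<tau>"
  unfolding sis_kernel_def by (intro divide_nonneg_nonneg sum_nonneg site_step_nonneg) auto

lemma sum_sis_kernel:
  "finite A \<Longrightarrow> (\<Sum>\<tau>\<in>A. K \<sigma> \<tau>) = (\<Sum>x<n. \<Sum>\<tau>\<in>A. site_step E a lam kap x \<sigma> \<tau>) / real n"
  unfolding sis_kernel_def by (simp add: sum_divide_distrib[symmetric] sum.swap[of _ A])

lemma sum_site_step_states: "\<sigma> \<in> \<Omega> \<Longrightarrow> x < n \<Longrightarrow> (\<Sum>\<tau>\<in>\<Omega>. site_step E a lam kap x \<sigma> \<tau>) = 1"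
  by (subst sum_site_step[OF finite_states]) (auto simp: states_def)

lemma sum_sis_kernel_states: "\<sigma> \<in> \<Omega> \<Longrightarrow> (\<Sum>\<tau>\<in>\<Omega>. K \<sigma> \<tau>) = 1"
  using n_pos by (simp add: sum_sis_kernel finite_states sum_site_step_states)

lemma sis_law_nonneg: "0 \<le> law \<eta> t \<tau>"
  by (induction t arbitrary: \<tau>) (auto intro!: sum_nonneg mult_nonneg_nonneg sis_kernel_nonneg)

lemma sum_sis_law_Suc:
  "finite A \<Longrightarrow> (\<Sum>\<tau>\<in>A. law \<eta> (Suc t) \<tau>) = (\<Sum>\<sigma>\<in>\<Omega>. law \<eta> t \<sigma> * (\<Sum>\<tau>\<in>A. K \<sigma> \<tau>))"
  by (simp add: sum_distrib_left sum.swap[of _ A])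

lemma sum_sis_law: "\<eta> \<in> \<Omega> \<Longrightarrow> (\<Sum>\<tau>\<in>\<Omega>. law \<eta> t \<tau>) = 1"
proof (induction t)
  case 0 then show ?case using finite_states by simp
next
  case (Suc t)
  have "(\<Sum>\<tau>\<in>\<Omega>. law \<eta> (Suc t) \<tau>) = (\<Sum>\<sigma>\<in>\<Omega>. law \<eta> t \<sigma> * 1)"
    by (subst sum_sis_law_Suc[OF finite_states]) (simp add: sum_sis_kernel_states)
  then show ?case using Suc by simp
qed

lemma sum_site_step_healthy_other:
  assumes "\<sigma> \<in> \<Omega>" "y < n" "y \<noteq> x"
  shows "(\<Sum>\<tau>\<in>{\<tau>\<in>\<Omega>. x \<notin> \<tau>}. site_step E a lam kap y \<sigma> \<tau>) = (if x \<notin> \<sigma> then 1 else 0)"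
  using assms by (subst sum_site_step) (auto simp: states_def finite_states)

lemma sum_site_step_healthy_self:
  assumes "\<sigma> \<in> \<Omega>" "x < n"
  shows "(\<Sum>\<tau>\<in>{\<tau>\<in>\<Omega>. x \<notin> \<tau>}. site_step E a lam kap x \<sigma> \<tau>) \<le> kap"
  using assms infection_prob_bounds[of \<sigma> x]
  by (subst sum_site_step) (auto simp: states_def finite_states)

lemma sum_sis_kernel_healthy_le:
  assumes "\<sigma> \<in> \<Omega>" "x < n"
  shows "(\<Sum>\<tau>\<in>{\<tau>\<in>\<Omega>. x \<notin> \<tau>}. K \<sigma> \<tau>) \<le> (real (n - 1) * (if x \<notin> \<sigma> then 1 else 0) + kap) / real n"
proof -
  let ?g = "\<lambda>y. \<Sum>\<tau>\<in>{\<tau>\<in>\<Omega>. x \<notin> \<tau>}. site_step E a lam kap y \<sigma> \<tau>"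
  have "(\<Sum>y<n. ?g y) = ?g x + (\<Sum>y\<in>V - {x}. ?g y)"
    using assms by (simp add: sum.remove)
  also have "(\<Sum>y\<in>V - {x}. ?g y) = real (n - 1) * (if x \<notin> \<sigma> then 1 else 0)"
    using assms by (simp add: sum_site_step_healthy_other)
  finally have "(\<Sum>y<n. ?g y) \<le> real (n - 1) * (if x \<notin> \<sigma> then 1 else 0) + kap"
    using sum_site_step_healthy_self[OF assms] by linarith
  then show ?thesis using n_pos by (simp add: sum_sis_kernel finite_states divide_right_mono)
qed

definition healthy_prob :: "nat set \<Rightarrow> nat \<Rightarrow> nat \<Rightarrow> real" where
  "healthy_prob \<eta> t x = (\<Sum>\<tau>\<in>{\<tau>\<in>\<Omega>. x \<notin> \<tau>}. law \<eta> t \<tau>)"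

lemma healthy_prob_Suc_le:
  assumes "\<eta> \<in> \<Omega>" "x < n"
  shows "healthy_prob \<eta> (Suc t) x \<le> (real (n - 1) * healthy_prob \<eta> t x + kap) / real n"
proof -
  have "healthy_prob \<eta> (Suc t) x = (\<Sum>\<sigma>\<in>\<Omega>. law \<eta> t \<sigma> * (\<Sum>\<tau>\<in>{\<tau>\<in>\<Omega>. x \<notin> \<tau>}. K \<sigma> \<tau>))"
    unfolding healthy_prob_def by (rule sum_sis_law_Suc) (simp add: finite_states)
  also have "\<dots> \<le> (\<Sum>\<sigma>\<in>\<Omega>. law \<eta> t \<sigma> * ((real (n - 1) * (if x \<notin> \<sigma> then 1 else 0) + kap) / real n))"
    by (intro sum_mono mult_left_mono sum_sis_kernel_healthy_le sis_law_nonneg assms(2))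
  also have "\<dots> = (real (n - 1) * (\<Sum>\<sigma>\<in>\<Omega>. law \<eta> t \<sigma> * (if x \<notin> \<sigma> then 1 else 0))
                   + kap * (\<Sum>\<sigma>\<in>\<Omega>. law \<eta> t \<sigma>)) / real n"
    by (simp add: sum_divide_distrib[symmetric] sum_distrib_left sum.distrib algebra_simps)
  also have "(\<Sum>\<sigma>\<in>\<Omega>. law \<eta> t \<sigma> * (if x \<notin> \<sigma> then 1 else 0)) = healthy_prob \<eta> t x"
    unfolding healthy_prob_def by (simp add: sum.inter_filter[symmetric] finite_states if_distrib cong: if_cong)
  finally show ?thesis using sum_sis_law[OF assms(1)] by simp
qed

lemma healthy_prob_le:
  assumes "\<eta> \<in> \<Omega>" "x < n"
  shows "healthy_prob \<eta> t x \<le> (1 - 1 / real n) ^ t + kap"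
proof (induction t)
  case 0
  have "healthy_prob \<eta> 0 x \<le> (\<Sum>\<tau>\<in>\<Omega>. law \<eta> 0 \<tau>)"
    unfolding healthy_prob_def by (rule sum_mono2) (auto simp: finite_states sis_law_nonneg)
  then show ?case using sum_sis_law[OF assms(1), of 0] kap_pos by simp
next
  case (Suc t)
  have "healthy_prob \<eta> (Suc t) x \<le> (real (n - 1) * healthy_prob \<eta> t x + kap) / real n"
    by (rule healthy_prob_Suc_le[OF assms])
  also have "\<dots> \<le> (real (n - 1) * ((1 - 1 / real n) ^ t + kap) + kap) / real n"
    using Suc by (intro divide_right_mono add_right_mono mult_left_mono) auto
  also have "\<dots> = (1 - 1 / real n) ^ Suc t + kap"
    using n_pos by (simp add: of_nat_diff field_simps)
  finally show ?case .
qed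

lemma sis_law_full_ge:
  assumes "\<eta> \<in> \<Omega>"
  shows "1 - real n * ((1 - 1 / real n) ^ t + kap) \<le> law \<eta> t V"
proof -
  let ?healthy = "\<lambda>\<tau>. \<Sum>x<n. if x \<notin> \<tau> then 1 else 0 :: real"
  have "1 - law \<eta> t V = (\<Sum>\<tau>\<in>\<Omega> - {V}. law \<eta> t \<tau>)"
    using sum_sis_law[OF assms, of t] by (simp add: sum_diff1 finite_states full_in_states)
  also have "\<dots> \<le> (\<Sum>\<tau>\<in>\<Omega> - {V}. law \<eta> t \<tau> * ?healthy \<tau>)"
  proof (rule sum_mono)
    fix \<tau> assume "\<tau> \<in> \<Omega> - {V}"
    then obtain x where x: "x < n" "x \<notin> \<tau>" by (auto simp: states_def)
    then have "1 \<le> ?healthy \<tau>"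
      using member_le_sum[of x V "\<lambda>x. if x \<notin> \<tau> then 1 else 0 :: real"] by simp
    then show "law \<eta> t \<tau> \<le> law \<eta> t \<tau> * ?healthy \<tau>"
      using sis_law_nonneg[of \<eta> t \<tau>] by (metis mult_left_mono mult.right_neutral)
  qed
  also have "\<dots> \<le> (\<Sum>\<tau>\<in>\<Omega>. law \<eta> t \<tau> * ?healthy \<tau>)"
    by (rule sum_mono2) (auto simp: finite_states sis_law_nonneg sum_nonneg)
  also have "\<dots> = (\<Sum>x<n. healthy_prob \<eta> t x)"
    unfolding healthy_prob_def sum_distrib_left
    by (subst sum.swap) (simp add: sum.inter_filter finite_states if_distrib cong: if_cong)
  also have "\<dots> \<le> (\<Sum>x<n. (1 - 1 / real n) ^ t + kap)"
    by (intro sum_mono healthy_prob_le assms) auto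
  finally show ?thesis by simp
qed

section \<open>Coupon collector bound from the empty state\<close>

lemma sum_site_step_superset_out:
  assumes "\<sigma> \<in> \<Omega>" "y < n" "y \<notin> B"
  shows "(\<Sum>\<tau>\<in>{\<tau>\<in>\<Omega>. B \<subseteq> \<tau>}. site_step E a lam kap y \<sigma> \<tau>) = (if B \<subseteq> \<sigma> then 1 else 0)"
  using assms by (subst sum_site_step) (auto simp: states_def finite_states)

lemma sum_site_step_superset_in:
  assumes "\<sigma> \<in> \<Omega>" "y < n" "y \<in> B"
  shows "(\<Sum>\<tau>\<in>{\<tau>\<in>\<Omega>. B \<subseteq> \<tau>}. site_step E a lam kap y \<sigma> \<tau>) \<le> (if B - {y} \<subseteq> \<sigma> then 1 else 0)"
  using assms infection_prob_bounds[of \<sigma> y] kap_pos kap_le_1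
  by (subst sum_site_step) (auto simp: states_def finite_states)

lemma sum_sis_kernel_superset_le:
  assumes "\<sigma> \<in> \<Omega>" "B \<subseteq> V"
  shows "(\<Sum>\<tau>\<in>{\<tau>\<in>\<Omega>. B \<subseteq> \<tau>}. K \<sigma> \<tau>) \<le>
     (real (n - card B) * (if B \<subseteq> \<sigma> then 1 else 0) + (\<Sum>y\<in>B. if B - {y} \<subseteq> \<sigma> then 1 else 0)) / real n"
proof -
  let ?g = "\<lambda>y. \<Sum>\<tau>\<in>{\<tau>\<in>\<Omega>. B \<subseteq> \<tau>}. site_step E a lam kap y \<sigma> \<tau>"
  have fin: "finite B" using assms(2) finite_subset by blast
  have "(\<Sum>y<n. ?g y) = (\<Sum>y\<in>V - B. ?g y) + (\<Sum>y\<in>B. ?g y)"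
    using assms fin by (simp add: sum.subset_diff)
  also have "(\<Sum>y\<in>V - B. ?g y) = real (n - card B) * (if B \<subseteq> \<sigma> then 1 else 0)"
    using assms fin by (simp add: sum_site_step_superset_out card_Diff_subset)
  also have "(\<Sum>y\<in>B. ?g y) \<le> (\<Sum>y\<in>B. if B - {y} \<subseteq> \<sigma> then 1 else 0)"
    using assms by (intro sum_mono sum_site_step_superset_in) auto
  finally show ?thesis using n_pos by (simp add: sum_sis_kernel finite_states divide_right_mono)
qed

definition covered_prob :: "nat \<Rightarrow> nat set \<Rightarrow> real" where
  "covered_prob t B = (\<Sum>\<tau>\<in>{\<tau>\<in>\<Omega>. B \<subseteq> \<tau>}. law {} t \<tau>)"

lemma covered_prob_Suc_le:
  assumes "B \<subseteq> V"
  shows "covered_prob (Suc t) B \<le>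
    (real (n - card B) * covered_prob t B + (\<Sum>y\<in>B. covered_prob t (B - {y}))) / real n"
proof -
  have "covered_prob (Suc t) B = (\<Sum>\<sigma>\<in>\<Omega>. law {} t \<sigma> * (\<Sum>\<tau>\<in>{\<tau>\<in>\<Omega>. B \<subseteq> \<tau>}. K \<sigma> \<tau>))"
    unfolding covered_prob_def by (rule sum_sis_law_Suc) (simp add: finite_states)
  also have "\<dots> \<le> (\<Sum>\<sigma>\<in>\<Omega>. law {} t \<sigma> * ((real (n - card B) * (if B \<subseteq> \<sigma> then 1 else 0)
                    + (\<Sum>y\<in>B. if B - {y} \<subseteq> \<sigma> then 1 else 0)) / real n))"
    by (intro sum_mono mult_left_mono sum_sis_kernel_superset_le sis_law_nonneg assms)
  also have "\<dots> = (real (n - card B) * (\<Sum>\<sigma>\<in>\<Omega>. law {} t \<sigma> * (if B \<subseteq> \<sigma> then 1 else 0))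
      + (\<Sum>y\<in>B. \<Sum>\<sigma>\<in>\<Omega>. law {} t \<sigma> * (if B - {y} \<subseteq> \<sigma> then 1 else 0))) / real n"
    by (simp add: sum_divide_distrib[symmetric] sum_distrib_left sum.distrib algebra_simps
        sum.swap[of _ \<Omega> B])
  also have "(\<Sum>\<sigma>\<in>\<Omega>. law {} t \<sigma> * (if B \<subseteq> \<sigma> then 1 else 0)) = covered_prob t B"
    unfolding covered_prob_def by (simp add: sum.inter_filter finite_states if_distrib cong: if_cong)
  also have "(\<Sum>y\<in>B. \<Sum>\<sigma>\<in>\<Omega>. law {} t \<sigma> * (if B - {y} \<subseteq> \<sigma> then 1 else 0))
      = (\<Sum>y\<in>B. covered_prob t (B - {y}))"
    unfolding covered_prob_def by (simp add: sum.inter_filter finite_states if_distrib cong: if_cong)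
  finally show ?thesis .
qed

text \<open>A vertex only becomes infected when it is updated, so this is the coupon collector bound.
In the induction step the recursion of \<open>covered_prob_Suc_le\<close> produces the first two terms of the
binomial expansion of \<open>(r + (1 - r)/n)^|B|\<close>, where \<open>r\<close> is the bound at time \<open>t\<close>.\<close>
lemma covered_prob_le:
  assumes "B \<subseteq> V"
  shows "covered_prob t B \<le> (1 - (1 - 1 / real n) ^ t) ^ card B"
  using assms
proof (induction t arbitrary: B)
  case 0
  show ?case
  proof (cases "B = {}")
    case True
    have "covered_prob 0 B \<le> (\<Sum>\<tau>\<in>\<Omega>. law {} 0 \<tau>)"
      unfolding covered_prob_def by (rule sum_mono2) (auto simp: finite_states sis_law_nonneg)
    then show ?thesis using True sum_sis_law[OF empty_in_states, of 0] by simp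
  next
    case False
    then have "covered_prob 0 B = 0" unfolding covered_prob_def by (intro sum.neutral) auto
    then show ?thesis by simp
  qed
next
  case (Suc t B)
  define r where "r = 1 - (1 - 1 / real n) ^ t"
  have r: "0 \<le> r" "r \<le> 1"
    using n_pos power_le_one[of "1 - 1 / real n" t] unfolding r_def by (auto simp: field_simps)
  have fin: "finite B" and card_le: "card B \<le> n"
    using Suc.prems finite_subset card_mono[of V B] by auto
  have IH_remove: "covered_prob t (B - {y}) \<le> r ^ (card B - 1)" if "y \<in> B" for y
    using Suc.IH[of "B - {y}"] Suc.prems fin that unfolding r_def by auto
  have "covered_prob (Suc t) B \<le>
      (real (n - card B) * r ^ card B + (\<Sum>y\<in>B. r ^ (card B - 1))) / real n"
    using Suc.prems Suc.IH IH_remove unfolding r_def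
    by (intro order.trans[OF covered_prob_Suc_le] divide_right_mono add_mono mult_left_mono sum_mono)
      auto
  also have "\<dots> \<le> (r + (1 - r) / real n) ^ card B"
  proof (cases "card B")
    case (Suc k)
    have "(real (n - card B) * r ^ card B + (\<Sum>y\<in>B. r ^ (card B - 1))) / real n
        = r ^ Suc k + real (Suc k) * r ^ k * ((1 - r) / real n)"
      using Suc card_le n_pos by (simp add: of_nat_diff field_simps)
    also have "\<dots> \<le> (r + (1 - r) / real n) ^ Suc k"
      using r by (intro power_add_ge_first_terms) auto
    finally show ?thesis using Suc by simp
  qed (use n_pos in simp)
  also have "r + (1 - r) / real n = 1 - (1 - 1 / real n) ^ Suc t"
    unfolding r_def using n_pos by (simp add: field_simps)
  finally show ?case .
qed

lemma sis_law_empty_full_le: "law {} t V \<le> (1 - (1 - 1 / real n) ^ t) ^ n"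
proof -
  have "law {} t V \<le> covered_prob t V"
    unfolding covered_prob_def by (rule member_le_sum) (auto simp: full_in_states sis_law_nonneg finite_states)
  then show ?thesis using covered_prob_le[of V t] by simp
qed

section \<open>Doeblin's argument and the stationary law\<close>

lemma sis_law_add: "\<tau> \<in> \<Omega> \<Longrightarrow> law \<eta> (s + t) \<tau> = (\<Sum>\<rho>\<in>\<Omega>. law \<eta> s \<rho> * law \<rho> t \<tau>)"
proof (induction t arbitrary: \<tau>)
  case 0
  have "(\<Sum>\<rho>\<in>\<Omega>. law \<eta> s \<rho> * law \<rho> 0 \<tau>) = (\<Sum>\<rho>\<in>\<Omega>. if \<rho> = \<tau> then law \<eta> s \<rho> else 0)"
    by (rule sum.cong) auto
  then show ?case using 0 finite_states by simp
next
  case (Suc t)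
  have "law \<eta> (s + Suc t) \<tau> = (\<Sum>\<sigma>\<in>\<Omega>. (\<Sum>\<rho>\<in>\<Omega>. law \<eta> s \<rho> * law \<rho> t \<sigma>) * K \<sigma> \<tau>)"
    using Suc.IH by (simp cong: sum.cong)
  also have "\<dots> = (\<Sum>\<sigma>\<in>\<Omega>. \<Sum>\<rho>\<in>\<Omega>. law \<eta> s \<rho> * (law \<rho> t \<sigma> * K \<sigma> \<tau>))"
    by (simp add: sum_distrib_right mult.assoc)
  also have "\<dots> = (\<Sum>\<rho>\<in>\<Omega>. law \<eta> s \<rho> * (\<Sum>\<sigma>\<in>\<Omega>. law \<rho> t \<sigma> * K \<sigma> \<tau>))"
    by (subst sum.swap) (simp add: sum_distrib_left)
  finally show ?case by simp
qed

definition evolve :: "(nat set \<Rightarrow> real) \<Rightarrow> nat \<Rightarrow> nat set \<Rightarrow> real" where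
  "evolve d t \<tau> = (\<Sum>\<sigma>\<in>\<Omega>. d \<sigma> * law \<sigma> t \<tau>)"

lemma evolve_0: "\<tau> \<in> \<Omega> \<Longrightarrow> evolve d 0 \<tau> = d \<tau>"
  by (simp add: evolve_def finite_states if_distrib cong: if_cong)

lemma evolve_add:
  assumes "\<tau> \<in> \<Omega>"
  shows "evolve d (s + t) \<tau> = evolve (evolve d s) t \<tau>"
proof -
  have "evolve (evolve d s) t \<tau> = (\<Sum>\<rho>\<in>\<Omega>. \<Sum>\<sigma>\<in>\<Omega>. d \<sigma> * (law \<sigma> s \<rho> * law \<rho> t \<tau>))"
    unfolding evolve_def by (simp add: sum_distrib_right mult.assoc)
  also have "\<dots> = evolve d (s + t) \<tau>"
    unfolding evolve_def using assms by (subst sum.swap) (simp add: sis_law_add sum_distrib_left)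
  finally show ?thesis ..
qed

lemma evolve_diff: "evolve (\<lambda>\<rho>. f \<rho> - g \<rho>) t \<tau> = evolve f t \<tau> - evolve g t \<tau>"
  unfolding evolve_def by (simp add: sum_subtractf left_diff_distrib)

lemma sis_law_add_evolve: "\<tau> \<in> \<Omega> \<Longrightarrow> law \<eta> (s + t) \<tau> = evolve (law \<eta> s) t \<tau>"
  unfolding evolve_def by (rule sis_law_add)

lemma sum_evolve: "(\<Sum>\<tau>\<in>\<Omega>. evolve d t \<tau>) = (\<Sum>\<sigma>\<in>\<Omega>. d \<sigma>)"
  unfolding evolve_def by (simp add: sum.swap[of _ \<Omega>] sum_distrib_left[symmetric] sum_sis_law)

lemma evolve_stationary:
  assumes "is_stationary n E a lam kap \<mu>" "\<tau> \<in> \<Omega>"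
  shows "evolve \<mu> t \<tau> = \<mu> \<tau>"
  using assms(2)
proof (induction t arbitrary: \<tau>)
  case 0 then show ?case by (rule evolve_0)
next
  case (Suc t)
  have "evolve \<mu> (Suc t) \<tau> = (\<Sum>\<sigma>\<in>\<Omega>. \<Sum>\<rho>\<in>\<Omega>. \<mu> \<sigma> * (law \<sigma> t \<rho> * K \<rho> \<tau>))"
    unfolding evolve_def by (simp add: sum_distrib_left)
  also have "\<dots> = (\<Sum>\<rho>\<in>\<Omega>. evolve \<mu> t \<rho> * K \<rho> \<tau>)"
    unfolding evolve_def by (subst sum.swap) (simp add: sum_distrib_right mult.assoc)
  also have "\<dots> = (\<Sum>\<rho>\<in>\<Omega>. \<mu> \<rho> * K \<rho> \<tau>)"
    using Suc.IH by simp
  also have "\<dots> = \<mu> \<tau>"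
    using assms(1) Suc.prems unfolding is_stationary_def by simp
  finally show ?case .
qed

lemma sum_abs_evolve_le: "(\<Sum>\<tau>\<in>\<Omega>. \<bar>evolve d t \<tau>\<bar>) \<le> (\<Sum>\<sigma>\<in>\<Omega>. \<bar>d \<sigma>\<bar>)"
proof -
  have "(\<Sum>\<tau>\<in>\<Omega>. \<bar>evolve d t \<tau>\<bar>) \<le> (\<Sum>\<tau>\<in>\<Omega>. \<Sum>\<sigma>\<in>\<Omega>. \<bar>d \<sigma>\<bar> * law \<sigma> t \<tau>)"
    unfolding evolve_def
    by (intro sum_mono order.trans[OF sum_abs]) (simp add: abs_mult sis_law_nonneg)
  also have "\<dots> = (\<Sum>\<sigma>\<in>\<Omega>. \<bar>d \<sigma>\<bar>)"
    by (simp add: sum.swap[of _ \<Omega>] sum_distrib_left[symmetric] sum_sis_law)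
  finally show ?thesis .
qed

text \<open>Doeblin's contraction: if every state reaches \<open>V\<close> at time \<open>T\<close> with probability at least \<open>c\<close>,
removing the common mass \<open>c\<close> at \<open>V\<close> leaves a kernel of total mass \<open>1 - c\<close>, which is all that acts
on a measure of total mass zero.\<close>
lemma sum_abs_evolve_contract:
  assumes c: "\<And>\<sigma>. \<sigma> \<in> \<Omega> \<Longrightarrow> c \<le> law \<sigma> T V" and d0: "(\<Sum>\<sigma>\<in>\<Omega>. d \<sigma>) = 0"
  shows "(\<Sum>\<tau>\<in>\<Omega>. \<bar>evolve d T \<tau>\<bar>) \<le> (1 - c) * (\<Sum>\<sigma>\<in>\<Omega>. \<bar>d \<sigma>\<bar>)"
proof -
  define w where "w \<sigma> \<tau> = law \<sigma> T \<tau> - (if \<tau> = V then c else 0)" for \<sigma> \<tau>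
  have w_nonneg: "\<sigma> \<in> \<Omega> \<Longrightarrow> 0 \<le> w \<sigma> \<tau>" for \<sigma> \<tau>
    using c[of \<sigma>] sis_law_nonneg[of \<sigma> T \<tau>] by (auto simp: w_def)
  have sum_w: "\<sigma> \<in> \<Omega> \<Longrightarrow> (\<Sum>\<tau>\<in>\<Omega>. w \<sigma> \<tau>) = 1 - c" for \<sigma>
    unfolding w_def using sum_sis_law[of \<sigma> T] full_in_states finite_states by (simp add: sum_subtractf)
  have "(\<Sum>\<sigma>\<in>\<Omega>. d \<sigma> * w \<sigma> \<tau>) = evolve d T \<tau> - (if \<tau> = V then c else 0) * (\<Sum>\<sigma>\<in>\<Omega>. d \<sigma>)" for \<tau>
    unfolding w_def evolve_def
    by (simp add: algebra_simps sum_subtractf sum_distrib_left sum_distrib_right)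
  then have evolve_eq: "evolve d T \<tau> = (\<Sum>\<sigma>\<in>\<Omega>. d \<sigma> * w \<sigma> \<tau>)" for \<tau>
    using d0 by simp
  have "(\<Sum>\<tau>\<in>\<Omega>. \<bar>evolve d T \<tau>\<bar>) \<le> (\<Sum>\<tau>\<in>\<Omega>. \<Sum>\<sigma>\<in>\<Omega>. \<bar>d \<sigma>\<bar> * w \<sigma> \<tau>)"
    unfolding evolve_eq by (intro sum_mono order.trans[OF sum_abs]) (simp add: abs_mult w_nonneg)
  also have "\<dots> = (\<Sum>\<sigma>\<in>\<Omega>. \<bar>d \<sigma>\<bar> * (1 - c))"
    by (simp add: sum.swap[of _ \<Omega>] sum_distrib_left[symmetric] sum_w)
  finally show ?thesis by (simp add: sum_distrib_right[symmetric] mult.commute)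
qed

lemma tv_dist_split_full:
  assumes "(\<Sum>\<tau>\<in>\<Omega>. \<nu> \<tau>) = 1" "(\<Sum>\<tau>\<in>\<Omega>. \<mu> \<tau>) = 1"
  shows "tv_dist n \<nu> \<mu> = (\<bar>\<nu> V - \<mu> V\<bar> + (\<Sum>\<tau>\<in>\<Omega> - {V}. \<bar>\<nu> \<tau> - \<mu> \<tau>\<bar>)) / 2"
    "(\<Sum>\<tau>\<in>\<Omega> - {V}. \<nu> \<tau>) = 1 - \<nu> V" "(\<Sum>\<tau>\<in>\<Omega> - {V}. \<mu> \<tau>) = 1 - \<mu> V"
  using sum.remove[OF finite_states full_in_states, of \<nu>] sum.remove[OF finite_states full_in_states, of \<mu>]
    sum.remove[OF finite_states full_in_states, of "\<lambda>\<tau>. \<bar>\<nu> \<tau> - \<mu> \<tau>\<bar>"] assms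
  unfolding tv_dist_def by simp_all

lemma tv_dist_le_max:
  assumes "\<And>\<tau>. 0 \<le> \<nu> \<tau>" "\<And>\<tau>. 0 \<le> \<mu> \<tau>" "(\<Sum>\<tau>\<in>\<Omega>. \<nu> \<tau>) = 1" "(\<Sum>\<tau>\<in>\<Omega>. \<mu> \<tau>) = 1"
  shows "tv_dist n \<nu> \<mu> \<le> max (1 - \<nu> V) (1 - \<mu> V)"
proof -
  have "(\<Sum>\<tau>\<in>\<Omega> - {V}. \<bar>\<nu> \<tau> - \<mu> \<tau>\<bar>) \<le> (\<Sum>\<tau>\<in>\<Omega> - {V}. \<nu> \<tau> + \<mu> \<tau>)"
    using assms(1,2) by (intro sum_mono) (simp add: abs_le_iff add_increasing add_increasing2)
  also have "\<dots> = (1 - \<nu> V) + (1 - \<mu> V)"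
    using tv_dist_split_full[OF assms(3,4)] by (simp add: sum.distrib)
  finally show ?thesis
    using tv_dist_split_full(1)[OF assms(3,4)] by (simp add: max_def abs_if split: if_splits)
qed

lemma tv_dist_ge_diff:
  assumes "(\<Sum>\<tau>\<in>\<Omega>. \<nu> \<tau>) = 1" "(\<Sum>\<tau>\<in>\<Omega>. \<mu> \<tau>) = 1"
  shows "\<mu> V - \<nu> V \<le> tv_dist n \<nu> \<mu>"
proof -
  have "\<bar>\<Sum>\<tau>\<in>\<Omega> - {V}. \<nu> \<tau> - \<mu> \<tau>\<bar> \<le> (\<Sum>\<tau>\<in>\<Omega> - {V}. \<bar>\<nu> \<tau> - \<mu> \<tau>\<bar>)"
    by (rule sum_abs)
  moreover have "(\<Sum>\<tau>\<in>\<Omega> - {V}. \<nu> \<tau> - \<mu> \<tau>) = (1 - \<nu> V) - (1 - \<mu> V)"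
    using tv_dist_split_full[OF assms] by (simp add: sum_subtractf)
  ultimately show ?thesis using tv_dist_split_full(1)[OF assms] by (simp add: abs_if split: if_splits)
qed

end

locale sis_minorized = sis_chain +
  fixes T :: nat and c :: real
  assumes T_pos: "0 < T" and c_pos: "0 < c" and c_le_1: "c \<le> 1"
    and minorization: "\<And>\<sigma>. \<sigma> \<in> \<Omega> \<Longrightarrow> c \<le> law \<sigma> T V"
begin

lemma sum_abs_evolve_decay:
  assumes "(\<Sum>\<sigma>\<in>\<Omega>. d \<sigma>) = 0"
  shows "(\<Sum>\<tau>\<in>\<Omega>. \<bar>evolve d (k * T + r) \<tau>\<bar>) \<le> (1 - c) ^ k * (\<Sum>\<sigma>\<in>\<Omega>. \<bar>d \<sigma>\<bar>)"
proof (induction k)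
  case 0 then show ?case using sum_abs_evolve_le by simp
next
  case (Suc k)
  have "(\<Sum>\<tau>\<in>\<Omega>. \<bar>evolve d (Suc k * T + r) \<tau>\<bar>) = (\<Sum>\<tau>\<in>\<Omega>. \<bar>evolve (evolve d (k * T + r)) T \<tau>\<bar>)"
    using evolve_add[of _ d "k * T + r" T] by (simp add: add_ac)
  also have "\<dots> \<le> (1 - c) * (\<Sum>\<tau>\<in>\<Omega>. \<bar>evolve d (k * T + r) \<tau>\<bar>)"
    using assms by (intro sum_abs_evolve_contract minorization) (simp_all add: sum_evolve)
  also have "\<dots> \<le> (1 - c) * ((1 - c) ^ k * (\<Sum>\<sigma>\<in>\<Omega>. \<bar>d \<sigma>\<bar>))"
    using Suc c_le_1 by (intro mult_left_mono) auto
  finally show ?case by simp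
qed

lemma sis_law_full_diff_le:
  assumes "\<tau> \<in> \<Omega>"
  shows "\<bar>law V (m + t) \<tau> - law V t \<tau>\<bar> \<le> 2 * (1 - c) ^ (t div T)"
proof -
  define d where "d \<rho> = law V m \<rho> - law V 0 \<rho>" for \<rho>
  have "law V (m + t) \<tau> - law V t \<tau> = evolve d t \<tau>"
    using sis_law_add_evolve[OF assms, of V m t] sis_law_add_evolve[OF assms, of V 0 t]
    unfolding d_def evolve_diff by simp
  also have "\<bar>\<dots>\<bar> \<le> (\<Sum>\<tau>\<in>\<Omega>. \<bar>evolve d t \<tau>\<bar>)"
    by (rule member_le_sum[OF assms, where f = "\<lambda>\<tau>. \<bar>evolve d t \<tau>\<bar>"]) (auto simp: finite_states)
  also have "\<dots> \<le> (1 - c) ^ (t div T) * (\<Sum>\<sigma>\<in>\<Omega>. \<bar>d \<sigma>\<bar>)"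
  proof -
    have "(\<Sum>\<sigma>\<in>\<Omega>. d \<sigma>) = 0"
      using sum_sis_law[OF full_in_states, of m] sum_sis_law[OF full_in_states, of 0]
      unfolding d_def sum_subtractf by simp
    then show ?thesis using sum_abs_evolve_decay[of d "t div T" "t mod T"] by simp
  qed
  also have "(\<Sum>\<sigma>\<in>\<Omega>. \<bar>d \<sigma>\<bar>) \<le> (\<Sum>\<sigma>\<in>\<Omega>. law V m \<sigma> + law V 0 \<sigma>)"
    unfolding d_def by (intro sum_mono) (use sis_law_nonneg in \<open>auto simp: abs_le_iff\<close>)
  also have "\<dots> = 2"
    using sum_sis_law[OF full_in_states, of m] sum_sis_law[OF full_in_states, of 0]
    by (simp add: sum.distrib)
  finally show ?thesis
    using c_le_1 by (simp add: mult_right_mono mult.commute)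
qed

lemma convergent_sis_law_full:
  assumes "\<tau> \<in> \<Omega>"
  shows "convergent (\<lambda>t. law V t \<tau>)"
proof -
  have "Cauchy (\<lambda>t. law V t \<tau>)"
  proof (rule CauchyI)
    fix \<epsilon> :: real assume \<epsilon>: "0 < \<epsilon>"
    have "(\<lambda>k. (1 - c) ^ k) \<longlonglongrightarrow> 0"
      using c_pos c_le_1 by (intro LIMSEQ_realpow_zero) auto
    then obtain N where N: "(1 - c) ^ N < \<epsilon> / 2"
      using \<epsilon> unfolding lim_sequentially by (metis dist_real_def diff_zero half_gt_zero order_refl abs_less_iff)
    have close: "\<bar>law V (d + t) \<tau> - law V t \<tau>\<bar> < \<epsilon>" if "N * T \<le> t" for d t
    proof -
      have "N \<le> t div T" using div_le_mono[OF that, of T] T_pos by simp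
      then have "(1 - c) ^ (t div T) \<le> (1 - c) ^ N"
        using c_pos c_le_1 by (intro power_decreasing) auto
      then show ?thesis using sis_law_full_diff_le[OF assms, of d t] N by auto
    qed
    show "\<exists>M. \<forall>m\<ge>M. \<forall>k\<ge>M. norm (law V m \<tau> - law V k \<tau>) < \<epsilon>"
    proof (intro exI allI impI)
      fix m k assume "N * T \<le> m" "N * T \<le> k"
      then show "norm (law V m \<tau> - law V k \<tau>) < \<epsilon>"
      proof (cases "k \<le> m")
        case True
        then show ?thesis using close[OF \<open>N * T \<le> k\<close>, of "m - k"] by simp
      next
        case False
        then show ?thesis using close[OF \<open>N * T \<le> m\<close>, of "k - m"] by (simp add: abs_minus_commute)
      qed
    qed
  qed
  then show ?thesis by (simp add: Cauchy_convergent_iff)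
qed

definition limit_law :: "nat set \<Rightarrow> real" where
  "limit_law \<tau> = (if \<tau> \<in> \<Omega> then lim (\<lambda>t. law V t \<tau>) else 0)"

lemma sis_law_tendsto_limit_law: "\<tau> \<in> \<Omega> \<Longrightarrow> (\<lambda>t. law V t \<tau>) \<longlonglongrightarrow> limit_law \<tau>"
  using convergent_sis_law_full unfolding limit_law_def by (simp add: convergent_LIMSEQ_iff)

lemma is_stationary_limit_law: "is_stationary n E a lam kap limit_law"
  unfolding is_stationary_def
proof (intro conjI ballI allI impI)
  fix \<sigma> assume "\<sigma> \<notin> \<Omega>" then show "limit_law \<sigma> = 0" by (simp add: limit_law_def)
next
  fix \<sigma> assume "\<sigma> \<in> \<Omega>"
  show "0 \<le> limit_law \<sigma>"
    by (rule LIMSEQ_le_const[OF sis_law_tendsto_limit_law[OF \<open>\<sigma> \<in> \<Omega>\<close>]]) (use sis_law_nonneg in blast)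
next
  have "(\<lambda>t. \<Sum>\<tau>\<in>\<Omega>. law V t \<tau>) \<longlonglongrightarrow> (\<Sum>\<tau>\<in>\<Omega>. limit_law \<tau>)"
    by (intro tendsto_sum sis_law_tendsto_limit_law)
  then show "(\<Sum>\<tau>\<in>\<Omega>. limit_law \<tau>) = 1"
    by (simp add: sum_sis_law full_in_states LIMSEQ_const_iff)
next
  fix \<tau> assume \<tau>: "\<tau> \<in> \<Omega>"
  have "(\<lambda>t. law V (Suc t) \<tau>) \<longlonglongrightarrow> limit_law \<tau>"
    using sis_law_tendsto_limit_law[OF \<tau>] by (rule LIMSEQ_Suc)
  moreover have "(\<lambda>t. \<Sum>\<sigma>\<in>\<Omega>. law V t \<sigma> * K \<sigma> \<tau>) \<longlonglongrightarrow> (\<Sum>\<sigma>\<in>\<Omega>. limit_law \<sigma> * K \<sigma> \<tau>)"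
    by (intro tendsto_sum tendsto_mult sis_law_tendsto_limit_law tendsto_const)
  ultimately show "limit_law \<tau> = (\<Sum>\<sigma>\<in>\<Omega>. limit_law \<sigma> * K \<sigma> \<tau>)"
    by (simp add: LIMSEQ_unique)
qed

lemma stationary_unique:
  assumes "is_stationary n E a lam kap \<mu>" "is_stationary n E a lam kap \<nu>"
  shows "\<mu> = \<nu>"
proof -
  define d where "d \<sigma> = \<mu> \<sigma> - \<nu> \<sigma>" for \<sigma>
  have "(\<Sum>\<sigma>\<in>\<Omega>. \<mu> \<sigma>) = 1" "(\<Sum>\<sigma>\<in>\<Omega>. \<nu> \<sigma>) = 1"
    using assms unfolding is_stationary_def by blast+
  then have d0: "(\<Sum>\<sigma>\<in>\<Omega>. d \<sigma>) = 0"
    unfolding d_def by (simp add: sum_subtractf)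
  have "evolve d T \<tau> = d \<tau>" if "\<tau> \<in> \<Omega>" for \<tau>
    unfolding d_def evolve_diff using evolve_stationary[OF _ that] assms by simp
  then have "(\<Sum>\<tau>\<in>\<Omega>. \<bar>d \<tau>\<bar>) \<le> (1 - c) * (\<Sum>\<tau>\<in>\<Omega>. \<bar>d \<tau>\<bar>)"
    using sum_abs_evolve_contract[OF minorization d0] by (simp cong: sum.cong)
  then have "(\<Sum>\<tau>\<in>\<Omega>. \<bar>d \<tau>\<bar>) \<le> 0"
    using c_pos by (simp add: algebra_simps mult_le_0_iff)
  then have "(\<Sum>\<tau>\<in>\<Omega>. \<bar>d \<tau>\<bar>) = 0"
    by (simp add: order_antisym sum_nonneg)
  then have "\<mu> \<tau> = \<nu> \<tau>" if "\<tau> \<in> \<Omega>" for \<tau>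
    using that sum_nonneg_eq_0_iff[OF finite_states, of "\<lambda>\<tau>. \<bar>d \<tau>\<bar>"] by (simp add: d_def)
  moreover have "\<mu> \<tau> = \<nu> \<tau>" if "\<tau> \<notin> \<Omega>" for \<tau>
    using that assms unfolding is_stationary_def by metis
  ultimately show ?thesis by blast
qed

lemma sis_stat_eq_limit_law: "sis_stat n E a lam kap = limit_law"
  unfolding sis_stat_def
  using is_stationary_limit_law stationary_unique[OF _ is_stationary_limit_law] by (rule the_equality)

end

locale sis_small_recovery = sis_chain +
  assumes n_kap_less_1: "real n * kap < 1"
begin

abbreviation "stat \<equiv> sis_stat n E a lam kap"

lemma exists_minorizing_time: "\<exists>T>0. real n * ((1 - 1 / real n) ^ T + kap) < 1"
proof -
  have "(\<lambda>T. (1 - 1 / real n) ^ T) \<longlonglongrightarrow> 0"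
    using n_pos by (intro LIMSEQ_realpow_zero) (auto simp: field_simps)
  moreover have "0 < (1 - real n * kap) / real n" using n_kap_less_1 n_pos by simp
  ultimately have "\<forall>\<^sub>F T in sequentially. (1 - 1 / real n) ^ T < (1 - real n * kap) / real n"
    by (rule order_tendstoD)
  then obtain N where "(1 - 1 / real n) ^ Suc N < (1 - real n * kap) / real n"
    unfolding eventually_sequentially by (blast intro: le_SucI)
  then have "real n * (1 - 1 / real n) ^ Suc N < 1 - real n * kap"
    using n_pos by (simp add: field_simps)
  then show ?thesis by (intro exI[of _ "Suc N"]) (simp add: algebra_simps)
qed

lemma is_stationary_sis_stat: "is_stationary n E a lam kap stat"
proof -
  obtain T where T: "T > 0" "real n * ((1 - 1 / real n) ^ T + kap) < 1"
    using exists_minorizing_time by blast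
  define c where "c = 1 - real n * ((1 - 1 / real n) ^ T + kap)"
  have "0 \<le> (1 - 1 / real n) ^ T" using n_pos by (simp add: field_simps)
  then have "c \<le> 1" unfolding c_def using kap_pos n_pos by simp
  moreover have "\<sigma> \<in> \<Omega> \<Longrightarrow> c \<le> law \<sigma> T V" for \<sigma>
    unfolding c_def by (rule sis_law_full_ge)
  ultimately interpret sis_minorized n E a lam kap T c
    using T by unfold_locales (auto simp: c_def)
  show ?thesis using sis_stat_eq_limit_law is_stationary_limit_law by simp
qed

lemma sis_stat_nonneg: "0 \<le> stat \<tau>"
  using is_stationary_sis_stat unfolding is_stationary_def by (cases "\<tau> \<in> \<Omega>") auto

lemma sum_sis_stat: "(\<Sum>\<tau>\<in>\<Omega>. stat \<tau>) = 1"
  using is_stationary_sis_stat unfolding is_stationary_def by blast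

lemma sis_stat_full_ge: "1 - real n * ((1 - 1 / real n) ^ t + kap) \<le> stat V"
proof -
  have "(\<Sum>\<sigma>\<in>\<Omega>. stat \<sigma> * (1 - real n * ((1 - 1 / real n) ^ t + kap)))
      \<le> (\<Sum>\<sigma>\<in>\<Omega>. stat \<sigma> * law \<sigma> t V)"
    by (intro sum_mono mult_left_mono sis_law_full_ge sis_stat_nonneg)
  also have "\<dots> = stat V"
    using evolve_stationary[OF is_stationary_sis_stat full_in_states, of t] by (simp add: evolve_def)
  finally show ?thesis by (simp add: sum_distrib_right[symmetric] sum_sis_stat)
qed

section \<open>Mixing time\<close>

lemma sis_d_le: "sis_d n E a lam kap t \<le> real n * ((1 - 1 / real n) ^ t + kap)"
  unfolding sis_d_def
proof (subst Max_le_iff; (intro ballI)?)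
  show "finite ((\<lambda>\<eta>. tv_dist n (law \<eta> t) stat) ` \<Omega>)" using finite_states by simp
  show "(\<lambda>\<eta>. tv_dist n (law \<eta> t) stat) ` \<Omega> \<noteq> {}" using full_in_states by auto
  fix x assume "x \<in> (\<lambda>\<eta>. tv_dist n (law \<eta> t) stat) ` \<Omega>"
  then obtain \<eta> where \<eta>: "\<eta> \<in> \<Omega>" and x: "x = tv_dist n (law \<eta> t) stat" by blast
  have "x \<le> max (1 - law \<eta> t V) (1 - stat V)"
    unfolding x using \<eta>
    by (intro tv_dist_le_max) (auto simp: sis_law_nonneg sis_stat_nonneg sum_sis_law sum_sis_stat)
  then show "x \<le> real n * ((1 - 1 / real n) ^ t + kap)"
    using sis_law_full_ge[OF \<eta>, of t] sis_stat_full_ge[of t] by linarith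
qed

lemma sis_d_ge: "stat V - law {} t V \<le> sis_d n E a lam kap t"
proof -
  have "stat V - law {} t V \<le> tv_dist n (law {} t) stat"
    by (rule tv_dist_ge_diff) (auto simp: sum_sis_law[OF empty_in_states] sum_sis_stat)
  also have "\<dots> \<le> sis_d n E a lam kap t"
    unfolding sis_d_def by (rule Max_ge) (use finite_states empty_in_states in auto)
  finally show ?thesis .
qed

lemma sis_tmix_bounds:
  assumes n: "n \<ge> 3" and \<epsilon>: "0 < \<epsilon>"
    and upper: "1 / real n + real n * kap \<le> \<epsilon>"
    and lower: "1 / real n + real n * kap + exp (- sqrt (real n) / exp 1) < 1 - \<epsilon>"
  shows "real n / 2 * ln (real n) * (1 - 1 / real n) \<le> real (sis_tmix n E a lam kap \<epsilon>)"
    and "real (sis_tmix n E a lam kap \<epsilon>) \<le> 2 * real n * ln (real n) * (1 + 1 / real n)"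
proof -
  let ?tmix = "sis_tmix n E a lam kap \<epsilon>"
  define t0 where "t0 = nat \<lceil>2 * real n * ln (real n)\<rceil>"
  have ln_n: "1 \<le> ln (real n)" using n by (rule ln_ge_1)
  have t0: "2 * real n * ln (real n) \<le> real t0" "real t0 \<le> 2 * real n * ln (real n) + 1"
  proof -
    have "real t0 = of_int \<lceil>2 * real n * ln (real n)\<rceil>" unfolding t0_def using ln_n by simp
    then show "2 * real n * ln (real n) \<le> real t0" "real t0 \<le> 2 * real n * ln (real n) + 1"
      using ceiling_correct[of "2 * real n * ln (real n)"] by linarith+
  qed
  have small_t0: "real n * (1 - 1 / real n) ^ t0 \<le> 1 / real n"
    using n t0(1) by (rule mult_power_one_minus_inverse_le)
  have "sis_d n E a lam kap t0 \<le> \<epsilon>"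
    using sis_d_le[of t0] small_t0 upper by (simp add: algebra_simps)
  then have tmix_le: "?tmix \<le> t0" and d_tmix: "sis_d n E a lam kap ?tmix \<le> \<epsilon>"
    unfolding sis_tmix_def by (rule Least_le, rule LeastI)
  have "real ?tmix \<le> 2 * real n * ln (real n) + 1" using tmix_le t0(2) by linarith
  also have "\<dots> \<le> 2 * real n * ln (real n) * (1 + 1 / real n)"
    using ln_n n by (simp add: algebra_simps)
  finally show "real ?tmix \<le> 2 * real n * ln (real n) * (1 + 1 / real n)" .
  show "real n / 2 * ln (real n) * (1 - 1 / real n) \<le> real ?tmix"
  proof (rule ccontr)
    assume "\<not> ?thesis"
    then have "real ?tmix < real n / 2 * ln (real n) * (1 - 1 / real n)" by simp
    also have "\<dots> \<le> real n / 2 * ln (real n)" using ln_n n by (simp add: mult_left_le)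
    finally have "real ?tmix \<le> real n / 2 * ln (real n)" by simp
    then have "law {} ?tmix V \<le> exp (- sqrt (real n) / exp 1)"
      by (intro order.trans[OF sis_law_empty_full_le] coupon_collector_estimate n)
    moreover have "1 - 1 / real n - real n * kap \<le> stat V"
      using sis_stat_full_ge[of t0] small_t0 by (simp add: algebra_simps)
    ultimately have "\<epsilon> < sis_d n E a lam kap ?tmix" using sis_d_ge[of ?tmix] lower by linarith
    then show False using d_tmix by linarith
  qed
qed

end

lemma error_terms_le:
  assumes n: "n \<ge> (2::nat)"
  shows "1 / real n + real n / (4 * (real n - 1)^2) + exp (- sqrt (real n) / exp 1)
    \<le> (2 + exp 1) / sqrt (real n)"
proof -
  have "0 \<le> (3 * real n - 2) * (real n - 2)" using n by (intro mult_nonneg_nonneg) auto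
  then have "real n * real n \<le> 4 * (real n - 1)^2"
    by (simp add: power2_eq_square algebra_simps)
  then have middle: "real n / (4 * (real n - 1)^2) \<le> 1 / real n"
    using n by (simp add: field_simps)
  have "sqrt (real n) * 1 \<le> sqrt (real n) * sqrt (real n)"
    using n by (intro mult_left_mono) auto
  then have "sqrt (real n) \<le> real n" by simp
  then have first: "1 / real n \<le> 1 / sqrt (real n)"
    using n by (intro divide_left_mono) auto
  define y where "y = sqrt (real n) / exp 1"
  have "y \<le> exp y" using exp_ge_add_one_self[of y] by linarith
  then have "exp (- y) \<le> 1 / y"
    using n by (simp add: y_def exp_minus field_simps)
  then have last: "exp (- sqrt (real n) / exp 1) \<le> exp 1 / sqrt (real n)"
    unfolding y_def by simp
  show ?thesis
    using first middle last by (simp add: add_divide_distrib)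
qed

lemma eventually_error_terms_less:
  assumes "0 < (m::real)"
  shows "\<forall>\<^sub>F n in sequentially. 1 / real n + real n / (4 * (real n - 1)^2) + exp (- sqrt (real n) / exp 1) < m"
proof -
  have "(\<lambda>n. (2 + exp 1) / sqrt (real n)) \<longlonglongrightarrow> 0"
    by (intro tendsto_divide_0[OF tendsto_const] filterlim_at_top_imp_at_infinity
        filterlim_compose[OF sqrt_at_top filterlim_real_sequentially])
  then have "\<forall>\<^sub>F n in sequentially. (2 + exp 1) / sqrt (real n) < m"
    using assms by (rule order_tendstoD)
  then show ?thesis
    using eventually_ge_at_top[of 2] by eventually_elim (use error_terms_le in fastforce)
qed

lemma gnp_prob_eq_1:
  assumes "\<And>E. P E"
  shows "gnp_prob n p P = 1"
proof -
  have fin: "finite (all_pairs n)"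
    by (rule finite_subset[of _ "Pow {..<n}"]) (auto simp: all_pairs_def)
  have "gnp_prob n p P = (\<Sum>E\<in>Pow (all_pairs n). (\<Prod>x\<in>E. p) * (\<Prod>x\<in>all_pairs n - E. 1 - p))"
    unfolding gnp_prob_def using assms fin
    by (intro sum.cong) (auto simp: card_Diff_subset finite_subset)
  also have "\<dots> = (\<Prod>x\<in>all_pairs n. p + (1 - p))"
    by (rule prod_add[OF fin, symmetric])
  finally show ?thesis by simp
qed

lemma sis_tmix_bounds_regime:
  assumes n: "n \<ge> 3" and \<epsilon>: "0 < \<epsilon>"
    and kap: "0 < kap" "kap < 1 / (4 * (real n - 1)^2)" "1 - kap \<le> a" "1 - kap > 1/2" and lam: "0 \<le> lam"
    and errors: "1 / real n + real n / (4 * (real n - 1)^2) + exp (- sqrt (real n) / exp 1) < min \<epsilon> (1 - \<epsilon>)"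
  shows "real n / 2 * ln (real n) * (1 - 1 / real n) \<le> real (sis_tmix n E a lam kap \<epsilon>) \<and>
         real (sis_tmix n E a lam kap \<epsilon>) \<le> 2 * real n * ln (real n) * (1 + 1 / real n)"
proof -
  have "real n * kap < real n / (4 * (real n - 1)^2)"
    using kap n by (simp add: mult_strict_left_mono[of kap "1 / (4 * (real n - 1)^2)" "real n", simplified])
  moreover have "0 \<le> 1 / real n" "0 < exp (- sqrt (real n) / exp 1)" by simp_all
  ultimately have "real n * kap < 1" and upper: "1 / real n + real n * kap \<le> \<epsilon>"
    and lower: "1 / real n + real n * kap + exp (- sqrt (real n) / exp 1) < 1 - \<epsilon>"
    using errors \<epsilon> by linarith+
  then interpret sis_small_recovery n E a lam kap
    by unfold_locales (use n kap lam in auto)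
  show ?thesis
    using sis_tmix_bounds[OF n \<epsilon> upper lower] by blast
qed

theorem mainTheorem5:
  fixes p a lam kap :: "nat \<Rightarrow> real" and \<alpha> :: real
  assumes alpha: "\<alpha> > 1"
    and p_range: "\<forall>n. 0 < p n \<and> p n \<le> 1"
    and np: "filterlim (\<lambda>n. real n * p n) at_top sequentially"
    and regime: "\<forall>\<^sub>F n in sequentially.
          0 < kap n \<and> kap n < 1 / (4 * (real n - 1)^2) \<and>
          a n > 1 - 1 / real n powr \<alpha> \<and>
          1 - 1 / real n powr \<alpha> > 1 - kap n \<and> 1 - kap n > 1/2 \<and>
          0 < lam n \<and> lam n \<le> 1 / (real n powr (1 + \<alpha>) * p n)"
  shows "\<forall>\<epsilon>. 0 < \<epsilon> \<and> \<epsilon> < 1 \<longrightarrow>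
    (\<exists>\<delta> :: nat \<Rightarrow> real. \<delta> \<longlonglongrightarrow> 0 \<and>
      (\<forall>\<epsilon>' > 0. \<forall>\<^sub>F n in sequentially.
         gnp_prob n (p n) (\<lambda>E.
            real n / 2 * ln (real n) * (1 - \<delta> n) \<le> real (sis_tmix n E (a n) (lam n) (kap n) \<epsilon>) \<and>
            real (sis_tmix n E (a n) (lam n) (kap n) \<epsilon>) \<le> 2 * real n * ln (real n) * (1 + \<delta> n))
         \<ge> 1 - \<epsilon>'))"
proof (intro allI impI exI[of _ "\<lambda>n. 1 / real n"] conjI lim_inverse_n')
  fix \<epsilon> \<epsilon>' :: real
  assume "0 < \<epsilon> \<and> \<epsilon> < 1" "0 < \<epsilon>'"
  then have "min \<epsilon> (1 - \<epsilon>) > 0" by simp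
  from eventually_conj[OF regime eventually_conj[OF eventually_ge_at_top[of 3]
        eventually_error_terms_less[OF this]]]
  show "\<forall>\<^sub>F n in sequentially. 1 - \<epsilon>' \<le> gnp_prob n (p n) (\<lambda>E.
      real n / 2 * ln (real n) * (1 - 1 / real n) \<le> real (sis_tmix n E (a n) (lam n) (kap n) \<epsilon>) \<and>
      real (sis_tmix n E (a n) (lam n) (kap n) \<epsilon>) \<le> 2 * real n * ln (real n) * (1 + 1 / real n))"
  proof eventually_elim
    case (elim n)
    then show ?case
      using \<open>0 < \<epsilon> \<and> \<epsilon> < 1\<close> \<open>0 < \<epsilon>'\<close>
      by - (subst gnp_prob_eq_1, rule sis_tmix_bounds_regime, auto)
  qed
qed

end
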